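(* Let $G$ be a connected bipartite graph with bipartition $(U,V)$, $|U|\ge|V|$. Let $V_W\subseteq V$ be the set of vertices of $V$ adjacent to a leaf, $\overline{V_W}=V\setminus V_W$, $U_L\subseteq U$ a set of leaves such that each $v\in V_W$ is adjacent to exactly one element of $U_L$ and $|U_L|=|V_W|$, and $\overline{U_L}=U\setminus U_L$. For $S\subseteq\overline{U_L}$ and $j\ge 1$ let $g_j(S)$ be the number of independent sets $\mathcal C$ of $G$ with $|\mathcal C|=j$ and $\mathcal C\cap\overline{U_L}=S$, and $g(S)=\sum_{j=1}^{\alpha(G)}(-1)^{j-1}g_j(S)$. Suppose $\overline{V_W}=\emptyset$. Then $g(S)=0$ for every nonempty $S\subseteq\overline{U_L}$, and $g(\emptyset)=0$ if $|V|$ is even, $g(\emptyset)=2$ if $|V|$ is odd.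
   Context: A leaf is a vertex with exactly one neighbor. An independent set is a set of pairwise non-adjacent vertices; $\alpha(G)$ is the maximum size of one. *)

theory Defs
  imports Main
begin

definition simple_graph :: "'a set \<Rightarrow> ('a \<Rightarrow> 'a \<Rightarrow> bool) \<Rightarrow> bool" where
  "simple_graph X E \<longleftrightarrow> finite X \<and> (\<forall>x y. E x y \<longrightarrow> x \<in> X \<and> y \<in> X)
     \<and> (\<forall>x y. E x y \<longrightarrow> E y x) \<and> (\<forall>x. \<not> E x x)"

definition connected_graph :: "'a set \<Rightarrow> ('a \<Rightarrow> 'a \<Rightarrow> bool) \<Rightarrow> bool" where
  "connected_graph X E \<longleftrightarrow> (\<forall>x\<in>X. \<forall>y\<in>X. E\<^sup>*\<^sup>* x y)"

definition bipartition :: "'a set \<Rightarrow> ('a \<Rightarrow> 'a \<Rightarrow> bool) \<Rightarrow> 'a set \<Rightarrow> 'a set \<Rightarrow> bool" where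
  "bipartition X E U V \<longleftrightarrow> X = U \<union> V \<and> U \<inter> V = {}
     \<and> (\<forall>x y. E x y \<longrightarrow> (x \<in> U \<and> y \<in> V) \<or> (x \<in> V \<and> y \<in> U))"

definition neighbors :: "('a \<Rightarrow> 'a \<Rightarrow> bool) \<Rightarrow> 'a \<Rightarrow> 'a set" where
  "neighbors E x = {y. E x y}"

definition leaf :: "('a \<Rightarrow> 'a \<Rightarrow> bool) \<Rightarrow> 'a \<Rightarrow> bool" where
  "leaf E x \<longleftrightarrow> card (neighbors E x) = 1"

definition indep_set :: "'a set \<Rightarrow> ('a \<Rightarrow> 'a \<Rightarrow> bool) \<Rightarrow> 'a set \<Rightarrow> bool" where
  "indep_set X E C \<longleftrightarrow> C \<subseteq> X \<and> (\<forall>x\<in>C. \<forall>y\<in>C. \<not> E x y)"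

definition alpha :: "'a set \<Rightarrow> ('a \<Rightarrow> 'a \<Rightarrow> bool) \<Rightarrow> nat" where
  "alpha X E = Max (card ` {C. indep_set X E C})"

definition gj :: "'a set \<Rightarrow> ('a \<Rightarrow> 'a \<Rightarrow> bool) \<Rightarrow> 'a set \<Rightarrow> nat \<Rightarrow> 'a set \<Rightarrow> nat" where
  "gj X E Ubar j S = card {C. indep_set X E C \<and> card C = j \<and> C \<inter> Ubar = S}"

definition gfun :: "'a set \<Rightarrow> ('a \<Rightarrow> 'a \<Rightarrow> bool) \<Rightarrow> 'a set \<Rightarrow> 'a set \<Rightarrow> int" where
  "gfun X E Ubar S = (\<Sum>j = 1..alpha X E. (-1) ^ (j - 1) * int (gj X E Ubar j S))"

end

theory Submission
  imports Defs "HOL-Library.Disjoint_Sets"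
begin

text \<open>Write \<open>\<sigma>(S)\<close> for the sum of \<open>(-1)^|C|\<close> over all independent sets \<open>C\<close> with
  \<open>C \<inter> (U - U\<^sub>L) = S\<close>; then \<open>g(S) = [S = {}] - \<sigma>(S)\<close>.  Toggling the leaf \<open>l(v)\<close> hanging at a
  vertex \<open>v \<notin> C\<close> keeps \<open>C\<close> independent, leaves \<open>C \<inter> (U - U\<^sub>L)\<close> unchanged and flips the sign
  of \<open>(-1)^|C|\<close>.  If \<open>S \<noteq> {}\<close>, connectivity gives a neighbour \<open>v \<in> V\<close> of some \<open>s \<in> S\<close>, which lies
  in no such \<open>C\<close>, so toggling \<open>l(v)\<close> is a fixed-point-free sign-reversing involution and
  \<open>\<sigma>(S) = 0\<close>.  If \<open>S = {}\<close>, the sets are the independent subsets of \<open>V \<union> U\<^sub>L\<close>; toggling the leaf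
  at a (canonically chosen) vertex of \<open>V - C\<close> pairs off all of them except \<open>V\<close> itself, so
  \<open>\<sigma>({}) = (-1)^|V|\<close>.\<close>

definition toggle :: "'a \<Rightarrow> 'a set \<Rightarrow> 'a set" where
  "toggle a C = (if a \<in> C then C - {a} else insert a C)"

lemma toggle_toggle [simp]: "toggle a (toggle a C) = C"
  unfolding toggle_def by auto

lemma toggle_neq: "toggle a C \<noteq> C"
  unfolding toggle_def by auto

lemma toggle_Int_eq: "a \<notin> A \<Longrightarrow> toggle a C \<inter> A = C \<inter> A"
  unfolding toggle_def by auto

lemma neg_one_power_card_toggle:
  assumes "finite C"
  shows "(-1::int) ^ card (toggle a C) = - ((-1) ^ card C)"
proof (cases "a \<in> C")
  case True
  then obtain n where "card C = Suc n" using assms by (metis card_Suc_Diff1)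
  then show ?thesis using True assms by (simp add: toggle_def)
qed (use assms in \<open>simp add: toggle_def\<close>)

lemma sum_neg_one_power_card_toggle_eq_0:
  assumes "\<And>C. C \<in> F \<Longrightarrow> finite C"
    and "\<And>C. C \<in> F \<Longrightarrow> toggle (a C) C \<in> F"
    and "\<And>C. C \<in> F \<Longrightarrow> a (toggle (a C) C) = a C"
  shows "(\<Sum>C\<in>F. (-1::int) ^ card C) = 0"
  by (rule sum_involution_eq_0[where h = "\<lambda>C. toggle (a C) C"])
    (use assms in \<open>simp_all add: toggle_neq neg_one_power_card_toggle\<close>)

lemma indep_set_finite: "simple_graph X E \<Longrightarrow> indep_set X E C \<Longrightarrow> finite C"
  unfolding simple_graph_def indep_set_def by (auto intro: finite_subset)

lemma finite_indep_sets: "simple_graph X E \<Longrightarrow> finite {C. indep_set X E C}"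
  by (rule finite_subset[of _ "Pow X"]) (auto simp: simple_graph_def indep_set_def)

lemma gfun_eq_neg_sum_nonempty:
  assumes "simple_graph X E"
  shows "gfun X E Ubar S =
    - (\<Sum>C | indep_set X E C \<and> C \<inter> Ubar = S \<and> C \<noteq> {}. (-1::int) ^ card C)"
proof -
  let ?F = "{C. indep_set X E C \<and> C \<inter> Ubar = S \<and> C \<noteq> {}}"
  have fin: "finite ?F"
    by (rule finite_subset[OF _ finite_indep_sets[OF assms]]) auto
  have card_pos: "card C \<ge> 1" if "C \<in> ?F" for C
    using that indep_set_finite[OF assms] by (simp add: Suc_le_eq card_gt_0_iff)
  have card_le: "card C \<le> alpha X E" if "C \<in> ?F" for C
    unfolding alpha_def using that finite_indep_sets[OF assms] by (intro Max_ge) auto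
  have "gfun X E Ubar S = (\<Sum>j = 1..alpha X E. \<Sum>C\<in>{C\<in>?F. card C = j}. (-1::int) ^ (card C - 1))"
    unfolding gfun_def gj_def
    by (intro sum.cong refl) (auto intro!: arg_cong[where f = card])
  also have "\<dots> = (\<Sum>C\<in>?F. (-1) ^ (card C - 1))"
    by (rule sum.group[OF fin finite_atLeastAtMost]) (use card_pos card_le in force)
  also have "\<dots> = (\<Sum>C\<in>?F. - ((-1) ^ card C))"
  proof (intro sum.cong refl)
    fix C assume "C \<in> ?F"
    then have "card C \<ge> 1" by (rule card_pos)
    then show "(-1::int) ^ (card C - 1) = - ((-1) ^ card C)" by (cases "card C") auto
  qed
  finally show ?thesis by (simp add: sum_negf)
qed

lemma gfun_eq_signed_sum:
  assumes "simple_graph X E"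
  shows "gfun X E Ubar S =
    (if S = {} then 1 else 0) - (\<Sum>C | indep_set X E C \<and> C \<inter> Ubar = S. (-1::int) ^ card C)"
proof -
  let ?F = "{C. indep_set X E C \<and> C \<inter> Ubar = S}"
  have fin: "finite ?F"
    by (rule finite_subset[OF _ finite_indep_sets[OF assms]]) auto
  have nonempty: "?F - {{}} = {C. indep_set X E C \<and> C \<inter> Ubar = S \<and> C \<noteq> {}}"
    by auto
  show ?thesis
  proof (cases "S = {}")
    case True
    then have "{} \<in> ?F" by (simp add: indep_set_def)
    from sum.remove[OF fin this, where g = "\<lambda>C. (-1::int) ^ card C"]
    have "(\<Sum>C\<in>?F. (-1::int) ^ card C)
        = 1 + (\<Sum>C | indep_set X E C \<and> C \<inter> Ubar = S \<and> C \<noteq> {}. (-1) ^ card C)"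
      by (simp add: nonempty)
    then show ?thesis
      using True by (simp add: gfun_eq_neg_sum_nonempty[OF assms])
  next
    case False
    then have "?F - {{}} = ?F" by auto
    then show ?thesis
      using False by (simp add: nonempty gfun_eq_neg_sum_nonempty[OF assms])
  qed
qed

lemma indep_set_toggle_pendant:
  assumes graph: "simple_graph X E" and C: "indep_set X E C"
    and pendant: "neighbors E p = {v}" and "v \<notin> C"
  shows "indep_set X E (toggle p C)"
proof -
  have "p \<in> X" and "\<not> E p p"
    using graph pendant by (auto simp: simple_graph_def neighbors_def)
  moreover have "\<not> E p x" "\<not> E x p" if "x \<in> C" for x
    using that graph pendant \<open>v \<notin> C\<close> by (auto simp: simple_graph_def neighbors_def)
  ultimately show ?thesis
    using C by (auto simp: indep_set_def toggle_def)
qed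

lemma signed_sum_indep_sets_eq_0:
  assumes graph: "simple_graph X E" and pendant: "neighbors E p = {v}" and "p \<notin> Ubar"
    and "s \<in> S" and "E s v"
  shows "(\<Sum>C | indep_set X E C \<and> C \<inter> Ubar = S. (-1::int) ^ card C) = 0"
proof (rule sum_neg_one_power_card_toggle_eq_0[where a = "\<lambda>_. p"])
  fix C assume C: "C \<in> {C. indep_set X E C \<and> C \<inter> Ubar = S}"
  then show "finite C" using indep_set_finite[OF graph] by blast
  have "v \<notin> C"
    using C \<open>s \<in> S\<close> \<open>E s v\<close> by (auto simp: indep_set_def)
  then show "toggle p C \<in> {C. indep_set X E C \<and> C \<inter> Ubar = S}"
    using C indep_set_toggle_pendant[OF graph _ pendant] toggle_Int_eq[OF \<open>p \<notin> Ubar\<close>] by auto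
qed simp

lemma signed_sum_indep_subsets_with_pendants:
  assumes graph: "simple_graph X E" and V: "indep_set X E V"
    and pendant: "\<And>v. v \<in> V \<Longrightarrow> neighbors E (l v) = {v}"
  shows "(\<Sum>C | indep_set X E C \<and> C \<subseteq> V \<union> l ` V. (-1::int) ^ card C) = (-1) ^ card V"
proof -
  let ?F = "{C. indep_set X E C \<and> C \<subseteq> V \<union> l ` V}"
  have fin: "finite ?F"
    by (rule finite_subset[OF _ finite_indep_sets[OF graph]]) auto
  have edge: "E (l v) v" if "v \<in> V" for v
    using pendant[OF that] by (auto simp: neighbors_def)
  have l_notin: "l v \<notin> V" if "v \<in> V" for v
    using V edge[OF that] that by (auto simp: indep_set_def)
  have superset: "C = V" if "C \<in> ?F" "V \<subseteq> C" for C
    using that edge unfolding indep_set_def by fastforce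
  define a where "a C = l (SOME w. w \<in> V - C)" for C
  have "(\<Sum>C\<in>?F - {V}. (-1::int) ^ card C) = 0"
  proof (rule sum_neg_one_power_card_toggle_eq_0[where a = a])
    fix C assume C: "C \<in> ?F - {V}"
    then show "finite C" using indep_set_finite[OF graph] by blast
    have "\<exists>w. w \<in> V - C" using C superset by blast
    then obtain w where w: "w \<in> V - C" and a: "a C = l w"
      unfolding a_def by (metis someI_ex)
    have same_gaps: "V - toggle (l w) C = V - C"
      using l_notin w by (auto simp: toggle_def)
    then have "a (toggle (l w) C) = a C"
      unfolding a_def by simp
    then show "a (toggle (a C) C) = a C"
      using a by simp
    have "indep_set X E (toggle (l w) C)"
      using C w by (intro indep_set_toggle_pendant[OF graph _ pendant]) auto
    moreover have "toggle (l w) C \<noteq> V"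
      using same_gaps w by auto
    ultimately show "toggle (a C) C \<in> ?F - {V}"
      using C w unfolding a by (auto simp: toggle_def)
  qed
  moreover have "V \<in> ?F" using V by blast
  ultimately show ?thesis
    by (simp add: sum.remove[OF fin \<open>V \<in> ?F\<close>])
qed

lemma bipartition_indep_set:
  assumes "simple_graph X E" and "bipartition X E U V"
  shows "indep_set X E V"
  using assms unfolding simple_graph_def bipartition_def indep_set_def by blast

lemma connected_bipartite_has_neighbor:
  assumes "connected_graph X E" and bip: "bipartition X E U V" and "V \<noteq> {}" and "s \<in> U"
  obtains y where "y \<in> V" and "E s y"
proof -
  obtain v where "v \<in> V" using \<open>V \<noteq> {}\<close> by blast
  moreover have "U \<inter> V = {}" and "X = U \<union> V"
    using bip by (auto simp: bipartition_def)
  ultimately have "E\<^sup>*\<^sup>* s v" and "s \<noteq> v"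
    using assms unfolding connected_graph_def by auto
  then obtain y where "E s y" by (metis converse_rtranclpE)
  moreover from this have "y \<in> V"
    using bip \<open>s \<in> U\<close> \<open>U \<inter> V = {}\<close> by (auto simp: bipartition_def)
  ultimately show ?thesis using that by blast
qed

lemma obtain_pendant_leaves:
  assumes graph: "simple_graph X E" and bip: "bipartition X E U V"
    and "UL \<subseteq> U" and leaves: "\<forall>u\<in>UL. leaf E u"
    and unique: "\<forall>v\<in>V. card (neighbors E v \<inter> UL) = 1"
  obtains l where "\<And>v. v \<in> V \<Longrightarrow> neighbors E (l v) = {v}" and "UL = l ` V"
proof -
  have sym: "E y x" if "E x y" for x y
    using graph that by (simp add: simple_graph_def)
  have leaf_nb: "\<exists>w. neighbors E u = {w}" if "u \<in> UL" for u
    using leaves that by (simp add: leaf_def card_1_singleton_iff)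
  have "\<forall>v\<in>V. \<exists>u. neighbors E v \<inter> UL = {u}"
    using unique by (simp add: card_1_singleton_iff)
  then obtain l where l: "\<And>v. v \<in> V \<Longrightarrow> neighbors E v \<inter> UL = {l v}"
    by metis
  have pendant: "neighbors E (l v) = {v}" if "v \<in> V" for v
  proof -
    have "l v \<in> UL" and v: "v \<in> neighbors E (l v)"
      using l[OF that] sym by (auto simp: neighbors_def)
    then obtain w where "neighbors E (l v) = {w}"
      using leaf_nb by blast
    with v show ?thesis by simp
  qed
  have "UL \<subseteq> l ` V"
  proof
    fix u assume u: "u \<in> UL"
    then obtain w where w: "neighbors E u = {w}" using leaf_nb by blast
    then have "E u w" unfolding neighbors_def by blast
    then have "w \<in> V"
      using bip u \<open>UL \<subseteq> U\<close> unfolding bipartition_def by blast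
    moreover have "u \<in> neighbors E w \<inter> UL"
      using w u sym by (auto simp: neighbors_def)
    ultimately show "u \<in> l ` V" using l by blast
  qed
  moreover have "l ` V \<subseteq> UL" using l by blast
  ultimately show ?thesis using that pendant by blast
qed

theorem lemma5p6:
  fixes X U V VW UL :: "'a set" and E :: "'a \<Rightarrow> 'a \<Rightarrow> bool"
  assumes "simple_graph X E"
    and "connected_graph X E"
    and "bipartition X E U V"
    and "card U \<ge> card V"
    and "V \<noteq> {}"
    and "VW = {v \<in> V. \<exists>u. E v u \<and> leaf E u}"
    and "UL \<subseteq> U" and "\<forall>u\<in>UL. leaf E u"
    and "\<forall>v\<in>VW. card (neighbors E v \<inter> UL) = 1"
    and "card UL = card VW"
    and "V - VW = {}"
  shows "(\<forall>S. S \<subseteq> U - UL \<and> S \<noteq> {} \<longrightarrow> gfun X E (U - UL) S = 0)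
    \<and> (even (card V) \<longrightarrow> gfun X E (U - UL) {} = 0)
    \<and> (odd (card V) \<longrightarrow> gfun X E (U - UL) {} = 2)"
proof -
  note graph = assms(1) and bip = assms(3)
  have "VW = V" using assms(6,11) by blast
  then obtain l where pendant: "\<And>v. v \<in> V \<Longrightarrow> neighbors E (l v) = {v}" and UL: "UL = l ` V"
    using obtain_pendant_leaves[OF graph bip assms(7,8)] assms(9) by metis
  have "gfun X E (U - UL) S = 0" if S: "S \<subseteq> U - UL" "S \<noteq> {}" for S
  proof -
    obtain s where "s \<in> S" using S by blast
    then obtain y where "y \<in> V" "E s y"
      using connected_bipartite_has_neighbor[OF assms(2) bip assms(5)] S by blast
    then show ?thesis
      using signed_sum_indep_sets_eq_0[OF graph pendant, of y "U - UL" s S] UL \<open>s \<in> S\<close>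
      by (simp add: gfun_eq_signed_sum[OF graph] S)
  qed
  moreover have "{C. indep_set X E C \<and> C \<inter> (U - UL) = {}} = {C. indep_set X E C \<and> C \<subseteq> V \<union> l ` V}"
    using bip UL assms(7) by (auto simp: bipartition_def indep_set_def)
  then have "gfun X E (U - UL) {} = 1 - (-1) ^ card V"
    using signed_sum_indep_subsets_with_pendants[OF graph bipartition_indep_set[OF graph bip] pendant]
    by (simp add: gfun_eq_signed_sum[OF graph])
  ultimately show ?thesis by simp
qed

end
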